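(* Let $p\colon X\to B_1$ and $q\colon Y\to B_2$ be Boolean sets with binary meets and let $\varphi\colon X\to Y$ be a morphism of Boolean sets. Then $\varphi$ preserves binary meets if and only if the relational covering morphism $\hat\varphi\colon Y^{\ast}\to X^{\ast}$ (where $\hat\varphi(G)$ is the set of ultrafilters $H$ of $X$ with $H\subseteq\varphi^{-1}(G)$) is a partial map, i.e. $|\hat\varphi(G)|\le 1$ for every ultrafilter $G$ of $Y$.
   Context: Convention: a "Boolean algebra" means a generalized Boolean algebra (relatively complemented distributive lattice with $0$); morphisms preserve lattice operations, $0$ and relative complements. Boolean set: a presheaf of sets $p\colon X\to B$ over a Boolean algebra $B$ (pairwise disjoint $X_e$, restriction maps $x\mapsto x|^e_f$ for $e\ge f$ with $|^e_e=\mathrm{id}$, $(x|^e_f)|^f_g=x|^e_g$) with all $X_e\ne\emptyset$, such that under the order $x\le y$ iff $p(x)\le p(y)$ and $x=y|^{p(y)}_{p(x)}$ there is a least element $0$, compatible pairs ($x\wedge y$ exists and $p(x\wedge y)=p(x)\wedge p(y)$) have joins, and $p(x)=0\Rightarrow x=0$. It has binary meets if $x\wedge y$ exists for all $x,y$. A morphism of Boolean sets is $\varphi\colon X\to Y$ with a Boolean algebra morphism $\overline{\varphi}\colon B_1\to B_2$ such that $q\varphi=\overline{\varphi}p$ and $\varphi(x|^a_b)=\varphi(x)|^{\overline{\varphi}(a)}_{\overline{\varphi}(b)}$; it preserves binary meets if $\varphi(x\wedge y)=\varphi(x)\wedge\varphi(y)$. Dual étalé spaces: $X^{\ast}$ (resp.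 $Y^{\ast}$) is the set of ultrafilters (maximal proper non-empty down-directed upward-closed subsets) of $X$ (resp. $Y$), topologized by the basis $L(a)=\{G: a\in G\}$, projecting to the ultrafilter spaces of $B_1$, $B_2$ via $G\mapsto p(G)$ (resp. $q(G)$). The map $\hat\varphi$ has underlying map $F\mapsto\overline{\varphi}^{-1}(F)$ on ultrafilters of $B_2$. *)

theory Defs
  imports Main
begin

definition partial_order_on_rel :: "'a set \<Rightarrow> ('a \<Rightarrow> 'a \<Rightarrow> bool) \<Rightarrow> bool" where
  "partial_order_on_rel A le \<longleftrightarrow>
     (\<forall>a\<in>A. le a a) \<and>
     (\<forall>a\<in>A. \<forall>b\<in>A. le a b \<and> le b a \<longrightarrow> a = b) \<and>
     (\<forall>a\<in>A. \<forall>b\<in>A. \<forall>c\<in>A. le a b \<and> le b c \<longrightarrow> le a c)"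

definition is_glb :: "'a set \<Rightarrow> ('a \<Rightarrow> 'a \<Rightarrow> bool) \<Rightarrow> 'a \<Rightarrow> 'a \<Rightarrow> 'a \<Rightarrow> bool" where
  "is_glb A le x y z \<longleftrightarrow> z \<in> A \<and> le z x \<and> le z y \<and> (\<forall>w\<in>A. le w x \<and> le w y \<longrightarrow> le w z)"

definition is_lub :: "'a set \<Rightarrow> ('a \<Rightarrow> 'a \<Rightarrow> bool) \<Rightarrow> 'a \<Rightarrow> 'a \<Rightarrow> 'a \<Rightarrow> bool" where
  "is_lub A le x y z \<longleftrightarrow> z \<in> A \<and> le x z \<and> le y z \<and> (\<forall>w\<in>A. le x w \<and> le y w \<longrightarrow> le z w)"

definition meet_of :: "'a set \<Rightarrow> ('a \<Rightarrow> 'a \<Rightarrow> bool) \<Rightarrow> 'a \<Rightarrow> 'a \<Rightarrow> 'a" where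
  "meet_of A le x y = (THE z. is_glb A le x y z)"

definition join_of :: "'a set \<Rightarrow> ('a \<Rightarrow> 'a \<Rightarrow> bool) \<Rightarrow> 'a \<Rightarrow> 'a \<Rightarrow> 'a" where
  "join_of A le x y = (THE z. is_lub A le x y z)"

definition bottom_of :: "'a set \<Rightarrow> ('a \<Rightarrow> 'a \<Rightarrow> bool) \<Rightarrow> 'a" where
  "bottom_of A le = (THE z. z \<in> A \<and> (\<forall>a\<in>A. le z a))"

definition gen_boolean_algebra :: "'b set \<Rightarrow> ('b \<Rightarrow> 'b \<Rightarrow> bool) \<Rightarrow> bool" where
  "gen_boolean_algebra B le \<longleftrightarrow>
     partial_order_on_rel B le \<and>
     (\<forall>a\<in>B. \<forall>b\<in>B. \<exists>c. is_glb B le a b c) \<and>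
     (\<forall>a\<in>B. \<forall>b\<in>B. \<exists>c. is_lub B le a b c) \<and>
     (\<exists>z\<in>B. \<forall>a\<in>B. le z a) \<and>
     (\<forall>a\<in>B. \<forall>b\<in>B. \<forall>c\<in>B.
        meet_of B le a (join_of B le b c) = join_of B le (meet_of B le a b) (meet_of B le a c)) \<and>
     (\<forall>a\<in>B. \<forall>b\<in>B. le a b \<longrightarrow>
        (\<exists>c\<in>B. meet_of B le a c = bottom_of B le \<and> join_of B le a c = b))"

definition rel_diff :: "'b set \<Rightarrow> ('b \<Rightarrow> 'b \<Rightarrow> bool) \<Rightarrow> 'b \<Rightarrow> 'b \<Rightarrow> 'b" where
  "rel_diff B le b a = (THE c. c \<in> B \<and> le c b \<and> meet_of B le c a = bottom_of B le \<and>
                              join_of B le c (meet_of B le a b) = b)"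

definition ba_morphism :: "'b set \<Rightarrow> ('b \<Rightarrow> 'b \<Rightarrow> bool) \<Rightarrow> 'c set \<Rightarrow> ('c \<Rightarrow> 'c \<Rightarrow> bool)
    \<Rightarrow> ('b \<Rightarrow> 'c) \<Rightarrow> bool" where
  "ba_morphism B1 le1 B2 le2 f \<longleftrightarrow>
     (\<forall>a\<in>B1. f a \<in> B2) \<and>
     (\<forall>a\<in>B1. \<forall>b\<in>B1. f (meet_of B1 le1 a b) = meet_of B2 le2 (f a) (f b)) \<and>
     (\<forall>a\<in>B1. \<forall>b\<in>B1. f (join_of B1 le1 a b) = join_of B2 le2 (f a) (f b)) \<and>
     f (bottom_of B1 le1) = bottom_of B2 le2 \<and>
     (\<forall>a\<in>B1. \<forall>b\<in>B1. f (rel_diff B1 le1 a b) = rel_diff B2 le2 (f a) (f b))"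

text \<open>A presheaf over B is given by the carrier X, the projection p, and the restriction
  res, where  res x f  stands for  x|^{p x}_f  (meaningful for f \<le> p x).\<close>

definition bs_le :: "('x \<Rightarrow> 'b) \<Rightarrow> ('x \<Rightarrow> 'b \<Rightarrow> 'x) \<Rightarrow> ('b \<Rightarrow> 'b \<Rightarrow> bool) \<Rightarrow> 'x \<Rightarrow> 'x \<Rightarrow> bool" where
  "bs_le p res le x y \<longleftrightarrow> le (p x) (p y) \<and> x = res y (p x)"

definition boolean_set :: "'x set \<Rightarrow> ('x \<Rightarrow> 'b) \<Rightarrow> ('x \<Rightarrow> 'b \<Rightarrow> 'x) \<Rightarrow> 'b set \<Rightarrow> ('b \<Rightarrow> 'b \<Rightarrow> bool) \<Rightarrow> bool" where
  "boolean_set X p res B le \<longleftrightarrow>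
     gen_boolean_algebra B le \<and>
     (\<forall>x\<in>X. p x \<in> B) \<and>
     (\<forall>e\<in>B. \<exists>x\<in>X. p x = e) \<and>
     (\<forall>x\<in>X. \<forall>f\<in>B. le f (p x) \<longrightarrow> res x f \<in> X \<and> p (res x f) = f) \<and>
     (\<forall>x\<in>X. res x (p x) = x) \<and>
     (\<forall>x\<in>X. \<forall>f\<in>B. \<forall>g\<in>B. le g f \<and> le f (p x) \<longrightarrow> res (res x f) g = res x g) \<and>
     (\<exists>z\<in>X. \<forall>x\<in>X. bs_le p res le z x) \<and>
     (\<forall>x\<in>X. \<forall>y\<in>X.
        (\<exists>m. is_glb X (bs_le p res le) x y m \<and> p m = meet_of B le (p x) (p y))
        \<longrightarrow> (\<exists>j. is_lub X (bs_le p res le) x y j)) \<and>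
     (\<forall>x\<in>X. p x = bottom_of B le \<longrightarrow> x = bottom_of X (bs_le p res le))"

definition has_binary_meets :: "'x set \<Rightarrow> ('x \<Rightarrow> 'b) \<Rightarrow> ('x \<Rightarrow> 'b \<Rightarrow> 'x) \<Rightarrow> ('b \<Rightarrow> 'b \<Rightarrow> bool) \<Rightarrow> bool" where
  "has_binary_meets X p res le \<longleftrightarrow>
     (\<forall>x\<in>X. \<forall>y\<in>X. \<exists>m. is_glb X (bs_le p res le) x y m)"

definition bs_morphism ::
  "'x set \<Rightarrow> ('x \<Rightarrow> 'b) \<Rightarrow> ('x \<Rightarrow> 'b \<Rightarrow> 'x) \<Rightarrow> 'b set \<Rightarrow> ('b \<Rightarrow> 'b \<Rightarrow> bool) \<Rightarrow>
   'y set \<Rightarrow> ('y \<Rightarrow> 'c) \<Rightarrow> ('y \<Rightarrow> 'c \<Rightarrow> 'y) \<Rightarrow> 'c set \<Rightarrow> ('c \<Rightarrow> 'c \<Rightarrow> bool) \<Rightarrow>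
   ('x \<Rightarrow> 'y) \<Rightarrow> ('b \<Rightarrow> 'c) \<Rightarrow> bool" where
  "bs_morphism X p resX B1 le1 Y q resY B2 le2 \<phi> \<phi>b \<longleftrightarrow>
     (\<forall>x\<in>X. \<phi> x \<in> Y) \<and>
     ba_morphism B1 le1 B2 le2 \<phi>b \<and>
     (\<forall>x\<in>X. q (\<phi> x) = \<phi>b (p x)) \<and>
     (\<forall>x\<in>X. \<forall>b\<in>B1. le1 b (p x) \<longrightarrow> \<phi> (resX x b) = resY (\<phi> x) (\<phi>b b))"

definition preserves_binary_meets ::
  "'x set \<Rightarrow> ('x \<Rightarrow> 'b) \<Rightarrow> ('x \<Rightarrow> 'b \<Rightarrow> 'x) \<Rightarrow> ('b \<Rightarrow> 'b \<Rightarrow> bool) \<Rightarrow>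
   'y set \<Rightarrow> ('y \<Rightarrow> 'c) \<Rightarrow> ('y \<Rightarrow> 'c \<Rightarrow> 'y) \<Rightarrow> ('c \<Rightarrow> 'c \<Rightarrow> bool) \<Rightarrow>
   ('x \<Rightarrow> 'y) \<Rightarrow> bool" where
  "preserves_binary_meets X p resX le1 Y q resY le2 \<phi> \<longleftrightarrow>
     (\<forall>x\<in>X. \<forall>y\<in>X. \<phi> (meet_of X (bs_le p resX le1) x y) = meet_of Y (bs_le q resY le2) (\<phi> x) (\<phi> y))"

definition proper_filter :: "'a set \<Rightarrow> ('a \<Rightarrow> 'a \<Rightarrow> bool) \<Rightarrow> 'a set \<Rightarrow> bool" where
  "proper_filter A le F \<longleftrightarrow>
     F \<subseteq> A \<and> F \<noteq> {} \<and> F \<noteq> A \<and>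
     (\<forall>x\<in>F. \<forall>y\<in>F. \<exists>z\<in>F. le z x \<and> le z y) \<and>
     (\<forall>x\<in>F. \<forall>y\<in>A. le x y \<longrightarrow> y \<in> F)"

definition ultrafilter_of :: "'a set \<Rightarrow> ('a \<Rightarrow> 'a \<Rightarrow> bool) \<Rightarrow> 'a set \<Rightarrow> bool" where
  "ultrafilter_of A le F \<longleftrightarrow> proper_filter A le F \<and>
     (\<forall>F'. proper_filter A le F' \<and> F \<subseteq> F' \<longrightarrow> F' = F)"

definition phi_hat ::
  "'x set \<Rightarrow> ('x \<Rightarrow> 'b) \<Rightarrow> ('x \<Rightarrow> 'b \<Rightarrow> 'x) \<Rightarrow> ('b \<Rightarrow> 'b \<Rightarrow> bool) \<Rightarrow>
   ('x \<Rightarrow> 'y) \<Rightarrow> 'y set \<Rightarrow> 'x set set" where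
  "phi_hat X p resX le1 \<phi> G =
     {H. ultrafilter_of X (bs_le p resX le1) H \<and> H \<subseteq> {x \<in> X. \<phi> x \<in> G}}"

end

theory Submission
  imports Defs
begin

text \<open>
  Ultrafilters of a Boolean set are prime: if \<open>y \<in> U\<close> and \<open>p y = c1 \<or> c2\<close>, then
  \<open>y|c1 \<in> U\<close> or \<open>y|c2 \<in> U\<close>; conversely a proper filter that decides every splitting of
  \<open>p x\<close> for one of its members \<open>x\<close> is maximal. Hence for an ultrafilter \<open>G\<close> of \<open>Y\<close> with
  \<open>\<phi> x \<in> G\<close>, the restrictions \<open>x|e\<close> with \<open>\<phi>(x|e) \<in> G\<close> generate an ultrafilter of \<open>X\<close>
  containing \<open>x\<close> and contained in \<open>\<phi>\<^sup>-\<^sup>1(G)\<close>.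

  If \<open>\<phi>\<close> preserves meets and \<open>H1, H2 \<in> phi_hat(G)\<close>, then \<open>\<phi>(a \<and> b) = \<phi> a \<and> \<phi> b \<in> G\<close> for
  \<open>a \<in> H1\<close>, \<open>b \<in> H2\<close>, so no such meet is \<open>0\<close>; the meets generate a proper filter containing
  both ultrafilters, and maximality gives \<open>H1 = H2\<close>. Conversely, if \<open>\<phi>(x \<and> y) < \<phi> x \<and> \<phi> y\<close>,
  a relative complement yields \<open>d \<noteq> 0\<close> below \<open>\<phi> x \<and> \<phi> y\<close> disjoint from \<open>\<phi>(x \<and> y)\<close>.
  An ultrafilter \<open>G \<ni> d\<close> contains \<open>\<phi> x\<close> and \<open>\<phi> y\<close> but not \<open>\<phi>(x \<and> y)\<close>, so the ultrafilters
  generated over \<open>G\<close> by \<open>x\<close> and by \<open>y\<close> are two members of \<open>phi_hat(G)\<close> that cannot coincide: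
  a common one would contain \<open>x \<and> y\<close>.
\<close>

section \<open>Filters in a poset with least element\<close>

lemma meet_of_eqI:
  assumes "\<forall>a\<in>A. \<forall>b\<in>A. le a b \<and> le b a \<longrightarrow> a = b" and "is_glb A le x y z"
  shows "meet_of A le x y = z"
  unfolding meet_of_def using assms by (intro the_equality) (auto simp: is_glb_def)

lemma join_of_eqI:
  assumes "\<forall>a\<in>A. \<forall>b\<in>A. le a b \<and> le b a \<longrightarrow> a = b" and "is_lub A le x y z"
  shows "join_of A le x y = z"
  unfolding join_of_def using assms by (intro the_equality) (auto simp: is_lub_def)

lemma bottom_of_eqI:
  assumes "\<forall>a\<in>A. \<forall>b\<in>A. le a b \<and> le b a \<longrightarrow> a = b" and "z \<in> A" and "\<forall>a\<in>A. le z a"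
  shows "bottom_of A le = z"
  unfolding bottom_of_def using assms by (intro the_equality) auto

lemma is_glb_swap: "is_glb A le a b m \<Longrightarrow> is_glb A le b a m"
  unfolding is_glb_def by blast

definition up_closure :: "'a set \<Rightarrow> ('a \<Rightarrow> 'a \<Rightarrow> bool) \<Rightarrow> 'a set \<Rightarrow> 'a set" where
  "up_closure A le S = {w \<in> A. \<exists>s\<in>S. le s w}"

locale bounded_poset =
  fixes A :: "'a set" and le :: "'a \<Rightarrow> 'a \<Rightarrow> bool"
  assumes partial_order: "partial_order_on_rel A le"
    and least_exists: "\<exists>z\<in>A. \<forall>a\<in>A. le z a"
begin

abbreviation bottom :: 'a where "bottom \<equiv> bottom_of A le"

lemma antisym_on: "\<forall>a\<in>A. \<forall>b\<in>A. le a b \<and> le b a \<longrightarrow> a = b"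
  using partial_order unfolding partial_order_on_rel_def by blast

lemma le_refl: "a \<in> A \<Longrightarrow> le a a"
  using partial_order unfolding partial_order_on_rel_def by blast

lemma le_antisym: "a \<in> A \<Longrightarrow> b \<in> A \<Longrightarrow> le a b \<Longrightarrow> le b a \<Longrightarrow> a = b"
  using antisym_on by blast

lemma le_trans: "a \<in> A \<Longrightarrow> b \<in> A \<Longrightarrow> c \<in> A \<Longrightarrow> le a b \<Longrightarrow> le b c \<Longrightarrow> le a c"
  using partial_order unfolding partial_order_on_rel_def by blast

lemma bottom_in: "bottom \<in> A" and bottom_least: "a \<in> A \<Longrightarrow> le bottom a"
proof -
  obtain z where "z \<in> A" "\<forall>a\<in>A. le z a" using least_exists by blast
  with bottom_of_eqI[OF antisym_on] show "bottom \<in> A" "a \<in> A \<Longrightarrow> le bottom a" by auto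
qed

lemma le_bottom_eq: "a \<in> A \<Longrightarrow> le a bottom \<Longrightarrow> a = bottom"
  using le_antisym bottom_in bottom_least by blast

lemma proper_filter_iff:
  "proper_filter A le F \<longleftrightarrow> F \<subseteq> A \<and> F \<noteq> {} \<and> bottom \<notin> F \<and>
     (\<forall>x\<in>F. \<forall>y\<in>F. \<exists>z\<in>F. le z x \<and> le z y) \<and> (\<forall>x\<in>F. \<forall>y\<in>A. le x y \<longrightarrow> y \<in> F)"
  unfolding proper_filter_def using bottom_in bottom_least by blast

lemma filter_subset: "proper_filter A le F \<Longrightarrow> F \<subseteq> A"
  and filter_nonempty: "proper_filter A le F \<Longrightarrow> F \<noteq> {}"
  and bottom_notin_filter: "proper_filter A le F \<Longrightarrow> bottom \<notin> F"
  and filter_directed: "proper_filter A le F \<Longrightarrow> x \<in> F \<Longrightarrow> y \<in> F \<Longrightarrow> \<exists>z\<in>F. le z x \<and> le z y"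
  and filter_upward: "proper_filter A le F \<Longrightarrow> x \<in> F \<Longrightarrow> y \<in> A \<Longrightarrow> le x y \<Longrightarrow> y \<in> F"
  unfolding proper_filter_iff by blast+

lemma filter_glb_closed:
  assumes F: "proper_filter A le F" and "x \<in> F" "y \<in> F" and glb: "is_glb A le x y m"
  shows "m \<in> F"
proof -
  obtain z where z: "z \<in> F" "le z x" "le z y" using filter_directed F assms(2,3) by blast
  then have "le z m" using glb filter_subset[OF F] unfolding is_glb_def by blast
  then show ?thesis using filter_upward[OF F z(1)] glb unfolding is_glb_def by blast
qed

lemma glb_mono:
  assumes glb: "is_glb A le a b m" "is_glb A le a' b' m'" and "le a a'" "le b b'"
    and "a \<in> A" "b \<in> A" "a' \<in> A" "b' \<in> A"
  shows "le m m'"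
proof -
  have "m \<in> A" "le m a" "le m b" using glb(1) unfolding is_glb_def by blast+
  then have "le m a'" "le m b'" using assms le_trans by blast+
  then show ?thesis using glb(2) \<open>m \<in> A\<close> unfolding is_glb_def by blast
qed

lemma proper_filter_up_closure:
  assumes S: "S \<subseteq> A" "S \<noteq> {}" "bottom \<notin> S"
    and directed: "\<forall>x\<in>S. \<forall>y\<in>S. \<exists>z\<in>S. le z x \<and> le z y"
  shows "proper_filter A le (up_closure A le S)"
proof -
  let ?U = "up_closure A le S"
  have "\<exists>z\<in>?U. le z x \<and> le z y" if xy: "x \<in> ?U" "y \<in> ?U" for x y
  proof -
    obtain s t where st: "s \<in> S" "t \<in> S" "le s x" "le t y" "x \<in> A" "y \<in> A"
      using xy unfolding up_closure_def by blast
    then obtain z where z: "z \<in> S" "le z s" "le z t" using directed by blast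
    then have "z \<in> A" "s \<in> A" "t \<in> A" using S(1) st by auto
    then have "le z x" "le z y" using z st le_trans by blast+
    moreover have "z \<in> ?U" using z(1) \<open>z \<in> A\<close> le_refl unfolding up_closure_def by blast
    ultimately show ?thesis by blast
  qed
  moreover have "?U \<noteq> {}" using S(1,2) le_refl unfolding up_closure_def by blast
  moreover have "bottom \<notin> ?U"
  proof
    assume "bottom \<in> ?U"
    then obtain s where "s \<in> S" "le s bottom" unfolding up_closure_def by blast
    then show False using S le_bottom_eq by blast
  qed
  moreover have "\<forall>x\<in>?U. \<forall>y\<in>A. le x y \<longrightarrow> y \<in> ?U"
    using S(1) le_trans unfolding up_closure_def by blast
  moreover have "?U \<subseteq> A" unfolding up_closure_def by blast
  ultimately show ?thesis unfolding proper_filter_iff by blast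
qed

lemma subset_up_closure: "S \<subseteq> A \<Longrightarrow> S \<subseteq> up_closure A le S"
  unfolding up_closure_def using le_refl by blast

lemma ultrafilter_proper: "ultrafilter_of A le U \<Longrightarrow> proper_filter A le U"
  and ultrafilter_maximal: "ultrafilter_of A le U \<Longrightarrow> proper_filter A le F \<Longrightarrow> U \<subseteq> F \<Longrightarrow> F = U"
  unfolding ultrafilter_of_def by blast+

lemma meets_generate_proper_filter:
  assumes F1: "proper_filter A le F1" and F2: "proper_filter A le F2"
    and glb: "\<And>a b. a \<in> F1 \<Longrightarrow> b \<in> F2 \<Longrightarrow> is_glb A le a b (m a b)"
    and nonzero: "\<And>a b. a \<in> F1 \<Longrightarrow> b \<in> F2 \<Longrightarrow> m a b \<noteq> bottom"
  shows "proper_filter A le (up_closure A le {m a b | a b. a \<in> F1 \<and> b \<in> F2})"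
proof (rule proper_filter_up_closure)
  let ?M = "{m a b | a b. a \<in> F1 \<and> b \<in> F2}"
  show "?M \<subseteq> A" using glb unfolding is_glb_def by blast
  show "?M \<noteq> {}" using filter_nonempty[OF F1] filter_nonempty[OF F2] by blast
  show "bottom \<notin> ?M"
  proof
    assume "bottom \<in> ?M"
    then obtain a b where "a \<in> F1" "b \<in> F2" "bottom = m a b" by blast
    then show False using nonzero by metis
  qed
  show "\<forall>u\<in>?M. \<forall>v\<in>?M. \<exists>z\<in>?M. le z u \<and> le z v"
  proof (intro ballI)
    fix u v assume "u \<in> ?M" "v \<in> ?M"
    then obtain a b a' b' where ab: "a \<in> F1" "b \<in> F2" "a' \<in> F1" "b' \<in> F2"
      and uv: "u = m a b" "v = m a' b'"
      by blast
    obtain a'' where a'': "a'' \<in> F1" "le a'' a" "le a'' a'" using filter_directed[OF F1 ab(1,3)] by blast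
    obtain b'' where b'': "b'' \<in> F2" "le b'' b" "le b'' b'" using filter_directed[OF F2 ab(2,4)] by blast
    have "a \<in> A" "b \<in> A" "a' \<in> A" "b' \<in> A" "a'' \<in> A" "b'' \<in> A"
      using ab a''(1) b''(1) filter_subset[OF F1] filter_subset[OF F2] by blast+
    then have "le (m a'' b'') u" "le (m a'' b'') v" unfolding uv
      using glb_mono[OF glb[OF a''(1) b''(1)] glb[OF ab(1,2)] a''(2) b''(2)]
        glb_mono[OF glb[OF a''(1) b''(1)] glb[OF ab(3,4)] a''(3) b''(3)] by blast+
    moreover have "m a'' b'' \<in> ?M" using a''(1) b''(1) by blast
    ultimately show "\<exists>z\<in>?M. le z u \<and> le z v" by blast
  qed
qed

lemma filter_subset_up_closure_meets:
  assumes F1: "proper_filter A le F1" and F2: "proper_filter A le F2"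
    and glb: "\<And>a b. a \<in> F1 \<Longrightarrow> b \<in> F2 \<Longrightarrow> is_glb A le a b (m a b)"
  shows "F1 \<subseteq> up_closure A le {m a b | a b. a \<in> F1 \<and> b \<in> F2}"
proof
  fix a assume "a \<in> F1"
  obtain b where "b \<in> F2" using filter_nonempty[OF F2] by blast
  then show "a \<in> up_closure A le {m a b | a b. a \<in> F1 \<and> b \<in> F2}"
    using glb[OF \<open>a \<in> F1\<close> \<open>b \<in> F2\<close>] \<open>a \<in> F1\<close> filter_subset[OF F1]
    unfolding up_closure_def is_glb_def by blast
qed

lemma ultrafilters_eq_if_meets_nonzero:
  assumes U1: "ultrafilter_of A le U1" and U2: "ultrafilter_of A le U2"
    and glb: "\<And>a b. a \<in> U1 \<Longrightarrow> b \<in> U2 \<Longrightarrow> is_glb A le a b (m a b)"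
    and nonzero: "\<And>a b. a \<in> U1 \<Longrightarrow> b \<in> U2 \<Longrightarrow> m a b \<noteq> bottom"
  shows "U1 = U2"
proof -
  let ?M = "{m a b | a b. a \<in> U1 \<and> b \<in> U2}"
  have F: "proper_filter A le U1" "proper_filter A le U2" using ultrafilter_proper U1 U2 by blast+
  have F': "proper_filter A le (up_closure A le ?M)"
    using meets_generate_proper_filter[OF F glb nonzero] .
  have "U1 \<subseteq> up_closure A le ?M" using filter_subset_up_closure_meets[OF F glb] .
  moreover have "U2 \<subseteq> up_closure A le {m b a | a b. a \<in> U2 \<and> b \<in> U1}"
  proof (rule filter_subset_up_closure_meets[OF F(2,1), where m="\<lambda>a b. m b a"])
    show "is_glb A le a b (m b a)" if "a \<in> U2" "b \<in> U1" for a b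
      using is_glb_swap[OF glb[OF that(2,1)]] .
  qed
  moreover have "{m b a | a b. a \<in> U2 \<and> b \<in> U1} = ?M" by blast
  ultimately show ?thesis using ultrafilter_maximal[OF U1 F'] ultrafilter_maximal[OF U2 F'] by simp
qed

lemma ultrafilter_extension:
  assumes F: "proper_filter A le F"
  shows "\<exists>U. ultrafilter_of A le U \<and> F \<subseteq> U"
proof -
  let ?P = "{G. proper_filter A le G \<and> F \<subseteq> G}"
  have "\<exists>U\<in>?P. \<forall>G\<in>?P. U \<subseteq> G \<longrightarrow> G = U"
  proof (rule subset_Zorn_nonempty)
    show "?P \<noteq> {}" using F by blast
    fix C assume C: "C \<noteq> {}" "subset.chain ?P C"
    then have CP: "C \<subseteq> ?P" and chain: "\<And>G1 G2. G1 \<in> C \<Longrightarrow> G2 \<in> C \<Longrightarrow> G1 \<subseteq> G2 \<or> G2 \<subseteq> G1"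
      unfolding subset_chain_def by blast+
    have filters: "proper_filter A le G" "F \<subseteq> G" if "G \<in> C" for G
      using subsetD[OF CP that] by simp_all
    have "\<forall>x\<in>\<Union>C. \<forall>y\<in>\<Union>C. \<exists>z\<in>\<Union>C. le z x \<and> le z y"
    proof (intro ballI)
      fix x y assume "x \<in> \<Union>C" "y \<in> \<Union>C"
      then obtain G1 G2 where "G1 \<in> C" "G2 \<in> C" "x \<in> G1" "y \<in> G2" by blast
      then obtain G where G: "G \<in> C" "x \<in> G" "y \<in> G" using chain by blast
      then obtain z where "z \<in> G" "le z x" "le z y" using filters(1) filter_directed by blast
      with G(1) show "\<exists>z\<in>\<Union>C. le z x \<and> le z y" by blast
    qed
    moreover have "\<forall>x\<in>\<Union>C. \<forall>y\<in>A. le x y \<longrightarrow> y \<in> \<Union>C"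
    proof (intro ballI impI)
      fix x y assume "x \<in> \<Union>C" "y \<in> A" "le x y"
      then obtain G where "G \<in> C" "x \<in> G" by blast
      with \<open>y \<in> A\<close> \<open>le x y\<close> have "y \<in> G" using filters(1) filter_upward by blast
      with \<open>G \<in> C\<close> show "y \<in> \<Union>C" by blast
    qed
    moreover have "\<Union>C \<subseteq> A" by (intro Union_least filter_subset filters(1))
    moreover have "bottom \<notin> \<Union>C" using filters(1) bottom_notin_filter by blast
    moreover have "F \<subseteq> \<Union>C"
    proof -
      obtain G where "G \<in> C" using C(1) by blast
      then show ?thesis using filters(2) by blast
    qed
    moreover then have "\<Union>C \<noteq> {}" using F filter_nonempty by blast
    ultimately show "\<Union>C \<in> ?P" by (simp add: proper_filter_iff)
  qed
  then obtain U where "U \<in> ?P" and maximal: "\<forall>G\<in>?P. U \<subseteq> G \<longrightarrow> G = U" ..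
  then have U: "proper_filter A le U" "F \<subseteq> U" by simp_all
  have "ultrafilter_of A le U"
    unfolding ultrafilter_of_def
  proof (intro conjI allI impI U(1))
    fix G assume "proper_filter A le G \<and> U \<subseteq> G"
    with U(2) have "G \<in> ?P" "U \<subseteq> G" by auto
    with maximal show "G = U" by blast
  qed
  with U(2) show ?thesis by blast
qed

lemma ultrafilter_exists:
  assumes "d \<in> A" "d \<noteq> bottom"
  shows "\<exists>U. ultrafilter_of A le U \<and> d \<in> U"
proof -
  have "proper_filter A le (up_closure A le {d})"
    using proper_filter_up_closure[of "{d}"] assms le_refl by blast
  then obtain U where "ultrafilter_of A le U" "up_closure A le {d} \<subseteq> U"
    using ultrafilter_extension by blast
  moreover have "d \<in> up_closure A le {d}" using subset_up_closure assms(1) by blast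
  ultimately show ?thesis by blast
qed

end

section \<open>Generalized Boolean algebras\<close>

locale gen_boolean_alg =
  fixes B :: "'b set" and le :: "'b \<Rightarrow> 'b \<Rightarrow> bool"
  assumes gen_boolean_algebra: "gen_boolean_algebra B le"

sublocale gen_boolean_alg \<subseteq> bounded_poset B le
  using gen_boolean_algebra unfolding gen_boolean_algebra_def by unfold_locales blast+

context gen_boolean_alg
begin

abbreviation meet :: "'b \<Rightarrow> 'b \<Rightarrow> 'b" where "meet \<equiv> meet_of B le"
abbreviation join :: "'b \<Rightarrow> 'b \<Rightarrow> 'b" where "join \<equiv> join_of B le"

lemma meet_glb: "a \<in> B \<Longrightarrow> b \<in> B \<Longrightarrow> is_glb B le a b (meet a b)"
  using gen_boolean_algebra meet_of_eqI[OF antisym_on] unfolding gen_boolean_algebra_def by metis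

lemma join_lub: "a \<in> B \<Longrightarrow> b \<in> B \<Longrightarrow> is_lub B le a b (join a b)"
  using gen_boolean_algebra join_of_eqI[OF antisym_on] unfolding gen_boolean_algebra_def by metis

lemma meet_in: "a \<in> B \<Longrightarrow> b \<in> B \<Longrightarrow> meet a b \<in> B"
  and meet_lower1: "a \<in> B \<Longrightarrow> b \<in> B \<Longrightarrow> le (meet a b) a"
  and meet_lower2: "a \<in> B \<Longrightarrow> b \<in> B \<Longrightarrow> le (meet a b) b"
  and meet_greatest: "a \<in> B \<Longrightarrow> b \<in> B \<Longrightarrow> c \<in> B \<Longrightarrow> le c a \<Longrightarrow> le c b \<Longrightarrow> le c (meet a b)"
  using meet_glb unfolding is_glb_def by blast+

lemma join_upper1: "a \<in> B \<Longrightarrow> b \<in> B \<Longrightarrow> le a (join a b)"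
  and join_upper2: "a \<in> B \<Longrightarrow> b \<in> B \<Longrightarrow> le b (join a b)"
  using join_lub unfolding is_lub_def by blast+

lemma meet_absorb1: "a \<in> B \<Longrightarrow> b \<in> B \<Longrightarrow> le a b \<Longrightarrow> meet a b = a"
  by (rule meet_of_eqI[OF antisym_on]) (auto simp: is_glb_def le_refl)

lemma meet_commute: "a \<in> B \<Longrightarrow> b \<in> B \<Longrightarrow> meet a b = meet b a"
  by (meson le_antisym meet_greatest meet_in meet_lower1 meet_lower2)

lemma join_bottom: "a \<in> B \<Longrightarrow> join a bottom = a"
  by (rule join_of_eqI[OF antisym_on]) (auto simp: is_lub_def le_refl bottom_least bottom_in)

lemma meet_join_distrib: "a \<in> B \<Longrightarrow> b \<in> B \<Longrightarrow> c \<in> B \<Longrightarrow> meet a (join b c) = join (meet a b) (meet a c)"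
  using gen_boolean_algebra unfolding gen_boolean_algebra_def by blast

lemma relative_complement: "a \<in> B \<Longrightarrow> b \<in> B \<Longrightarrow> le a b \<Longrightarrow> \<exists>c\<in>B. meet a c = bottom \<and> join a c = b"
  using gen_boolean_algebra unfolding gen_boolean_algebra_def by blast

lemma meet_mono: "a \<in> B \<Longrightarrow> b \<in> B \<Longrightarrow> c \<in> B \<Longrightarrow> le a b \<Longrightarrow> le (meet a c) (meet b c)"
  by (meson le_trans meet_greatest meet_in meet_lower1 meet_lower2)

lemma disjoint_below: "a \<in> B \<Longrightarrow> b \<in> B \<Longrightarrow> c \<in> B \<Longrightarrow> le a b \<Longrightarrow> meet b c = bottom \<Longrightarrow> meet a c = bottom"
  by (metis le_bottom_eq meet_in meet_mono)

end

section \<open>Ultrafilters of a Boolean set\<close>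

locale bset =
  fixes X :: "'x set" and p :: "'x \<Rightarrow> 'b" and res :: "'x \<Rightarrow> 'b \<Rightarrow> 'x"
    and B :: "'b set" and le :: "'b \<Rightarrow> 'b \<Rightarrow> bool"
  assumes boolean_set: "boolean_set X p res B le"

sublocale bset \<subseteq> B: gen_boolean_alg B le
  using boolean_set unfolding boolean_set_def by unfold_locales blast

context bset
begin

abbreviation leX :: "'x \<Rightarrow> 'x \<Rightarrow> bool" where "leX \<equiv> bs_le p res le"

lemma p_in: "x \<in> X \<Longrightarrow> p x \<in> B"
  and p_surj: "e \<in> B \<Longrightarrow> \<exists>x\<in>X. p x = e"
  and res_in: "x \<in> X \<Longrightarrow> e \<in> B \<Longrightarrow> le e (p x) \<Longrightarrow> res x e \<in> X"
  and p_res: "x \<in> X \<Longrightarrow> e \<in> B \<Longrightarrow> le e (p x) \<Longrightarrow> p (res x e) = e"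
  and res_p: "x \<in> X \<Longrightarrow> res x (p x) = x"
  and res_res: "x \<in> X \<Longrightarrow> e \<in> B \<Longrightarrow> f \<in> B \<Longrightarrow> le f e \<Longrightarrow> le e (p x) \<Longrightarrow> res (res x e) f = res x f"
  and least_exists_X: "\<exists>z\<in>X. \<forall>x\<in>X. leX z x"
  and eq_bottom_if_p_eq_bottom: "x \<in> X \<Longrightarrow> p x = B.bottom \<Longrightarrow> x = bottom_of X leX"
  using boolean_set unfolding boolean_set_def by blast+

lemma partial_order_leX: "partial_order_on_rel X leX"
  unfolding partial_order_on_rel_def
proof (intro conjI ballI impI)
  fix x assume "x \<in> X"
  then show "leX x x" unfolding bs_le_def using B.le_refl p_in res_p by simp
next
  fix x y assume "x \<in> X" "y \<in> X" and "leX x y \<and> leX y x"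
  then have "p x = p y" "x = res y (p x)" "y = res y (p y)"
    using B.le_antisym p_in res_p unfolding bs_le_def by auto
  then show "x = y" by simp
next
  fix x y z assume X: "x \<in> X" "y \<in> X" "z \<in> X" and "leX x y \<and> leX y z"
  then have le: "le (p x) (p y)" "le (p y) (p z)" and eq: "x = res y (p x)" "y = res z (p y)"
    unfolding bs_le_def by auto
  have "le (p x) (p z)" using B.le_trans[OF p_in p_in p_in] X le by blast
  moreover have "res z (p x) = x" using res_res[OF X(3) p_in p_in] X le eq by metis
  ultimately show "leX x z" unfolding bs_le_def by simp
qed

end

sublocale bset \<subseteq> bounded_poset X "bs_le p res le"
  using partial_order_leX least_exists_X by unfold_locales

context bset
begin

lemma p_bottom: "p bottom = B.bottom"
proof -
  obtain x where x: "x \<in> X" "p x = B.bottom" using p_surj B.bottom_in by blast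
  then have "le (p bottom) B.bottom" using bottom_least[OF x(1)] unfolding bs_le_def by simp
  then show ?thesis using B.le_bottom_eq p_in bottom_in by blast
qed

lemma res_bottom: "x \<in> X \<Longrightarrow> res x B.bottom = bottom"
  using eq_bottom_if_p_eq_bottom res_in p_res B.bottom_in B.bottom_least p_in by metis

lemma res_le: "x \<in> X \<Longrightarrow> e \<in> B \<Longrightarrow> le e (p x) \<Longrightarrow> leX (res x e) x"
  unfolding bs_le_def using p_res by auto

lemma le_res_iff:
  assumes "x \<in> X" "e \<in> B" "le e (p x)" "w \<in> X"
  shows "leX w (res x e) \<longleftrightarrow> leX w x \<and> le (p w) e"
  using assms p_res res_res p_in B.le_trans unfolding bs_le_def by metis

lemma res_mono: "x \<in> X \<Longrightarrow> e \<in> B \<Longrightarrow> f \<in> B \<Longrightarrow> le e f \<Longrightarrow> le f (p x) \<Longrightarrow> leX (res x e) (res x f)"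
  using le_res_iff res_in res_le p_res B.le_trans p_in by metis

lemma res_of_le: "leX z x \<Longrightarrow> res x (p z) = z"
  unfolding bs_le_def by simp

lemma filter_res_meet:
  assumes F: "proper_filter X leX F" and y: "y \<in> X"
    and a: "a1 \<in> B" "a2 \<in> B" "le a1 (p y)" "le a2 (p y)" "res y a1 \<in> F" "res y a2 \<in> F"
  shows "res y (B.meet a1 a2) \<in> F"
proof -
  obtain z where z: "z \<in> F" "leX z (res y a1)" "leX z (res y a2)"
    using filter_directed[OF F a(5,6)] by blast
  have "z \<in> X" using z(1) F filter_subset by blast
  then have "leX z y" "le (p z) (B.meet a1 a2)"
    using z a y le_res_iff B.meet_greatest p_in by metis+
  moreover have "B.meet a1 a2 \<in> B" "le (B.meet a1 a2) (p y)"
    using a y B.meet_in B.meet_lower1 B.le_trans p_in by meson+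
  ultimately show ?thesis
    using filter_upward[OF F z(1)] le_res_iff res_in y \<open>z \<in> X\<close> by blast
qed

lemma disjoint_notin_filter:
  assumes F: "proper_filter X leX F" and "u \<in> F" "v \<in> F" "B.meet (p u) (p v) = B.bottom"
  shows False
proof -
  obtain z where z: "z \<in> F" "leX z u" "leX z v" using filter_directed assms by blast
  have "z \<in> X" "u \<in> X" "v \<in> X" using z assms filter_subset by auto
  then have "p z = B.bottom"
    using z assms(4) B.meet_greatest B.le_bottom_eq p_in unfolding bs_le_def by metis
  then show False
    using eq_bottom_if_p_eq_bottom \<open>z \<in> X\<close> z(1) bottom_notin_filter F by metis
qed

definition filter_adjoin :: "'x set \<Rightarrow> 'x \<Rightarrow> 'b \<Rightarrow> 'x set" where
  "filter_adjoin F y c =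
     up_closure X leX ((\<lambda>a. res y (B.meet a c)) ` {a \<in> B. le a (p y) \<and> res y a \<in> F})"

lemma meet_le_p: "y \<in> X \<Longrightarrow> a \<in> B \<Longrightarrow> c \<in> B \<Longrightarrow> le c (p y) \<Longrightarrow> le (B.meet a c) (p y)"
  using B.le_trans[OF B.meet_in _ p_in] B.meet_lower2 by blast

lemma filter_adjoin_proper:
  assumes F: "proper_filter X leX F" and y: "y \<in> F" and c: "c \<in> B" "le c (p y)"
    and nonzero: "\<And>a. a \<in> B \<Longrightarrow> le a (p y) \<Longrightarrow> res y a \<in> F \<Longrightarrow> B.meet a c \<noteq> B.bottom"
  shows "proper_filter X leX (filter_adjoin F y c)"
  unfolding filter_adjoin_def
proof (rule proper_filter_up_closure)
  let ?A = "{a \<in> B. le a (p y) \<and> res y a \<in> F}"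
  let ?S = "(\<lambda>a. res y (B.meet a c)) ` ?A"
  have yX: "y \<in> X" using filter_subset[OF F] y by blast
  show "?S \<subseteq> X" using res_in[OF yX B.meet_in meet_le_p[OF yX _ c]] c(1) by blast
  have "p y \<in> ?A" using p_in[OF yX] B.le_refl[OF p_in[OF yX]] res_p[OF yX] y by simp
  then show "?S \<noteq> {}" by blast
  show "bottom \<notin> ?S"
  proof
    assume "bottom \<in> ?S"
    then obtain a where a: "a \<in> ?A" and bot: "bottom = res y (B.meet a c)" ..
    have "B.meet a c = p (res y (B.meet a c))"
      using a p_res[OF yX B.meet_in meet_le_p[OF yX _ c]] c(1) by simp
    also have "\<dots> = B.bottom" using bot[symmetric] p_bottom by simp
    finally show False using nonzero a by blast
  qed
  show "\<forall>u\<in>?S. \<forall>v\<in>?S. \<exists>z\<in>?S. leX z u \<and> leX z v"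
  proof (intro ballI)
    fix u v assume "u \<in> ?S" "v \<in> ?S"
    then obtain a1 a2 where a: "a1 \<in> B" "le a1 (p y)" "res y a1 \<in> F" "a2 \<in> B" "le a2 (p y)" "res y a2 \<in> F"
      and uv: "u = res y (B.meet a1 c)" "v = res y (B.meet a2 c)"
      by blast
    let ?a = "B.meet a1 a2"
    have aB: "?a \<in> B" using B.meet_in[OF a(1,4)] .
    moreover have "le ?a (p y)"
      using B.le_trans[OF aB a(1) p_in[OF yX] B.meet_lower1[OF a(1,4)] a(2)] .
    moreover have "res y ?a \<in> F" using filter_res_meet[OF F yX a(1,4,2,5,3,6)] .
    ultimately have "res y (B.meet ?a c) \<in> ?S" by blast
    moreover have "leX (res y (B.meet ?a c)) (res y (B.meet a1 c))"
      using res_mono[OF yX B.meet_in[OF aB c(1)] B.meet_in[OF a(1) c(1)]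
          B.meet_mono[OF aB a(1) c(1) B.meet_lower1[OF a(1,4)]] meet_le_p[OF yX a(1) c]] .
    moreover have "leX (res y (B.meet ?a c)) (res y (B.meet a2 c))"
      using res_mono[OF yX B.meet_in[OF aB c(1)] B.meet_in[OF a(4) c(1)]
          B.meet_mono[OF aB a(4) c(1) B.meet_lower2[OF a(1,4)]] meet_le_p[OF yX a(4) c]] .
    ultimately show "\<exists>z\<in>?S. leX z u \<and> leX z v" unfolding uv by blast
  qed
qed

lemma filter_subset_filter_adjoin:
  assumes F: "proper_filter X leX F" and y: "y \<in> F" and c: "c \<in> B"
  shows "F \<subseteq> filter_adjoin F y c"
proof
  fix u assume "u \<in> F"
  obtain z where z: "z \<in> F" "leX z u" "leX z y" using filter_directed[OF F \<open>u \<in> F\<close> y] by blast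
  have X: "y \<in> X" "z \<in> X" "u \<in> X" using z y \<open>u \<in> F\<close> filter_subset[OF F] by auto
  have pz: "le (p z) (p y)" "res y (p z) = z" using z(3) res_of_le unfolding bs_le_def by auto
  have "leX (res y (B.meet (p z) c)) (res y (p z))"
    using res_mono[OF X(1) B.meet_in[OF p_in[OF X(2)] c] p_in[OF X(2)]
        B.meet_lower1[OF p_in[OF X(2)] c] pz(1)] .
  then have "leX (res y (B.meet (p z) c)) u"
    using le_trans[OF res_in[OF X(1) B.meet_in[OF p_in[OF X(2)] c]] X(2,3)] z(2) pz(2)
      B.le_trans[OF B.meet_in[OF p_in[OF X(2)] c] p_in[OF X(2)] p_in[OF X(1)]
        B.meet_lower1[OF p_in[OF X(2)] c] pz(1)]
    by simp
  moreover have "p z \<in> {a \<in> B. le a (p y) \<and> res y a \<in> F}" using p_in[OF X(2)] pz z(1) by simp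
  ultimately show "u \<in> filter_adjoin F y c"
    unfolding filter_adjoin_def up_closure_def using X(3) by blast
qed

lemma res_in_filter_adjoin:
  assumes F: "proper_filter X leX F" and y: "y \<in> F" and c: "c \<in> B" "le c (p y)"
  shows "res y c \<in> filter_adjoin F y c"
proof -
  let ?S = "(\<lambda>a. res y (B.meet a c)) ` {a \<in> B. le a (p y) \<and> res y a \<in> F}"
  have yX: "y \<in> X" using filter_subset[OF F] y by blast
  have "p y \<in> {a \<in> B. le a (p y) \<and> res y a \<in> F}"
    using p_in[OF yX] B.le_refl[OF p_in[OF yX]] res_p[OF yX] y by simp
  then have "res y (B.meet (p y) c) \<in> ?S" by (rule imageI)
  moreover have "B.meet (p y) c = c"
    using B.meet_commute[OF p_in[OF yX] c(1)] B.meet_absorb1[OF c(1) p_in[OF yX] c(2)] by simp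
  moreover have "?S \<subseteq> X" using res_in[OF yX B.meet_in meet_le_p[OF yX _ c]] c(1) by blast
  ultimately show ?thesis unfolding filter_adjoin_def using subset_up_closure by auto
qed

lemma ultrafilter_disjoint_witness:
  assumes U: "ultrafilter_of X leX U" and y: "y \<in> U" and c: "c \<in> B" "le c (p y)"
    and notin: "res y c \<notin> U"
  shows "\<exists>a\<in>B. le a (p y) \<and> res y a \<in> U \<and> B.meet a c = B.bottom"
proof (rule ccontr)
  assume "\<not> ?thesis"
  then have "proper_filter X leX (filter_adjoin U y c)"
    using filter_adjoin_proper[OF ultrafilter_proper[OF U] y c] by blast
  then have "filter_adjoin U y c = U"
    using ultrafilter_maximal[OF U] filter_subset_filter_adjoin[OF ultrafilter_proper[OF U] y c(1)] by blast
  then show False using res_in_filter_adjoin[OF ultrafilter_proper[OF U] y c] notin by simp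
qed

lemma ultrafilter_prime:
  assumes U: "ultrafilter_of X leX U" and y: "y \<in> U" and c: "c1 \<in> B" "c2 \<in> B"
    and cover: "B.join c1 c2 = p y"
  shows "res y c1 \<in> U \<or> res y c2 \<in> U"
proof (rule ccontr)
  assume neither: "\<not> ?thesis"
  have F: "proper_filter X leX U" using U ultrafilter_proper by blast
  have yX: "y \<in> X" using y F filter_subset by blast
  have le_c: "le c1 (p y)" "le c2 (p y)" using c cover B.join_upper1 B.join_upper2 by metis+
  obtain a1 a2 where a: "a1 \<in> B" "le a1 (p y)" "res y a1 \<in> U" "B.meet a1 c1 = B.bottom"
    "a2 \<in> B" "le a2 (p y)" "res y a2 \<in> U" "B.meet a2 c2 = B.bottom"
    using ultrafilter_disjoint_witness[OF U y] c le_c neither by metis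
  let ?a = "B.meet a1 a2"
  have aB: "?a \<in> B" "le ?a (p y)" using a B.meet_in B.meet_lower1 B.le_trans p_in yX by meson+
  have "B.meet ?a c1 = B.bottom" "B.meet ?a c2 = B.bottom"
    using a c aB B.disjoint_below B.meet_lower1 B.meet_lower2 by metis+
  moreover have "?a = B.meet ?a (p y)" using aB p_in yX B.meet_absorb1 by metis
  \<comment> \<open>\<open>a = a \<and> (c1 \<or> c2) = (a \<and> c1) \<or> (a \<and> c2) = 0\<close>\<close>
  ultimately have "?a = B.bottom"
    using B.meet_join_distrib[OF aB(1) c] cover B.join_bottom B.bottom_in by metis
  then have "bottom \<in> U" using filter_res_meet[OF F yX] a res_bottom yX by metis
  then show False using bottom_notin_filter F by blast
qed

lemma ultrafilterI_prime_at:
  assumes F: "proper_filter X leX F" and x: "x \<in> F"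
    and decides: "\<And>c1 c2. c1 \<in> B \<Longrightarrow> c2 \<in> B \<Longrightarrow> B.meet c1 c2 = B.bottom \<Longrightarrow> B.join c1 c2 = p x
                    \<Longrightarrow> res x c1 \<in> F \<or> res x c2 \<in> F"
  shows "ultrafilter_of X leX F"
  unfolding ultrafilter_of_def
proof (intro conjI allI impI F)
  fix F' assume "proper_filter X leX F' \<and> F \<subseteq> F'"
  then have F': "proper_filter X leX F'" and sub: "F \<subseteq> F'" by auto
  have "w \<in> F" if w: "w \<in> F'" for w
  proof -
    obtain z where z: "z \<in> F'" "leX z w" "leX z x" using filter_directed[OF F' w] x sub by blast
    have X: "x \<in> X" "z \<in> X" "w \<in> X" using x z w F F' filter_subset by auto
    have pz: "p z \<in> B" "le (p z) (p x)" using X z(3) p_in unfolding bs_le_def by auto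
    obtain c where c: "c \<in> B" "B.meet (p z) c = B.bottom" "B.join (p z) c = p x"
      using B.relative_complement[OF pz(1) p_in[OF X(1)] pz(2)] by blast
    have "le c (p x)" using c pz B.join_upper2 by metis
    then have "B.meet (p z) (p (res x c)) = B.bottom" using c p_res X(1) by simp
    then have "res x c \<notin> F" using disjoint_notin_filter[OF F' z(1)] sub by blast
    then have "z \<in> F" using decides[OF pz(1) c] res_of_le[OF z(3)] by simp
    then show "w \<in> F" using filter_upward[OF F _ X(3) z(2)] by blast
  qed
  then show "F' = F" using sub by blast
qed

lemma exists_disjoint_below:
  assumes u: "u \<in> X" and v: "v \<in> X" and "leX u v" "u \<noteq> v"
  shows "\<exists>d\<in>X. d \<noteq> bottom \<and> leX d v \<and> B.meet (p d) (p u) = B.bottom"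
proof -
  have le: "le (p u) (p v)" and u_eq: "res v (p u) = u" using \<open>leX u v\<close> unfolding bs_le_def by auto
  obtain c where c: "c \<in> B" "B.meet (p u) c = B.bottom" "B.join (p u) c = p v"
    using B.relative_complement[OF p_in[OF u] p_in[OF v] le] by blast
  have cv: "le c (p v)" using B.join_upper2[OF p_in[OF u] c(1)] c(3) by simp
  have "c \<noteq> B.bottom"
  proof
    assume "c = B.bottom"
    then have "p u = p v" using c(3) B.join_bottom[OF p_in[OF u]] by simp
    then show False using u_eq res_p[OF v] \<open>u \<noteq> v\<close> by simp
  qed
  then have "res v c \<noteq> bottom" using p_res[OF v c(1) cv] p_bottom by metis
  moreover have "B.meet (p (res v c)) (p u) = B.bottom"
    using p_res[OF v c(1) cv] B.meet_commute[OF c(1) p_in[OF u]] c(2) by simp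
  ultimately show ?thesis using res_in[OF v c(1) cv] res_le[OF v c(1) cv] by blast
qed

lemma meet_of_glb:
  "has_binary_meets X p res le \<Longrightarrow> x \<in> X \<Longrightarrow> y \<in> X \<Longrightarrow> is_glb X leX x y (meet_of X leX x y)"
  unfolding has_binary_meets_def using meet_of_eqI[OF antisym_on] by metis

end

section \<open>Morphisms and the relational covering\<close>

locale boolean_set_morphism = X: bset X p resX B1 le1 + Y: bset Y q resY B2 le2
  for X :: "'x set" and p :: "'x \<Rightarrow> 'b" and resX :: "'x \<Rightarrow> 'b \<Rightarrow> 'x"
    and B1 :: "'b set" and le1 :: "'b \<Rightarrow> 'b \<Rightarrow> bool"
    and Y :: "'y set" and q :: "'y \<Rightarrow> 'c" and resY :: "'y \<Rightarrow> 'c \<Rightarrow> 'y"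
    and B2 :: "'c set" and le2 :: "'c \<Rightarrow> 'c \<Rightarrow> bool" +
  fixes \<phi> :: "'x \<Rightarrow> 'y" and \<phi>b :: "'b \<Rightarrow> 'c"
  assumes morphism: "bs_morphism X p resX B1 le1 Y q resY B2 le2 \<phi> \<phi>b"
begin

lemma phi_in: "x \<in> X \<Longrightarrow> \<phi> x \<in> Y"
  and q_phi: "x \<in> X \<Longrightarrow> q (\<phi> x) = \<phi>b (p x)"
  and phi_res: "x \<in> X \<Longrightarrow> e \<in> B1 \<Longrightarrow> le1 e (p x) \<Longrightarrow> \<phi> (resX x e) = resY (\<phi> x) (\<phi>b e)"
  and phib_in: "e \<in> B1 \<Longrightarrow> \<phi>b e \<in> B2"
  and phib_meet: "a \<in> B1 \<Longrightarrow> b \<in> B1 \<Longrightarrow> \<phi>b (X.B.meet a b) = Y.B.meet (\<phi>b a) (\<phi>b b)"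
  and phib_join: "a \<in> B1 \<Longrightarrow> b \<in> B1 \<Longrightarrow> \<phi>b (X.B.join a b) = Y.B.join (\<phi>b a) (\<phi>b b)"
  and phib_bottom: "\<phi>b X.B.bottom = Y.B.bottom"
  using morphism unfolding bs_morphism_def ba_morphism_def by blast+

lemma phib_mono:
  assumes "a \<in> B1" "b \<in> B1" "le1 a b"
  shows "le2 (\<phi>b a) (\<phi>b b)"
proof -
  have "\<phi>b a = Y.B.meet (\<phi>b a) (\<phi>b b)" using phib_meet X.B.meet_absorb1 assms by metis
  moreover have "le2 (Y.B.meet (\<phi>b a) (\<phi>b b)) (\<phi>b b)"
    using Y.B.meet_lower2[OF phib_in phib_in] assms by blast
  ultimately show ?thesis by argo
qed

lemma phi_mono:
  assumes "z \<in> X" "x \<in> X" "X.leX z x"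
  shows "Y.leX (\<phi> z) (\<phi> x)"
proof -
  have le: "le1 (p z) (p x)" and eq: "resX x (p z) = z" using assms(3) unfolding bs_le_def by auto
  have "le2 (q (\<phi> z)) (q (\<phi> x))" using phib_mono[OF X.p_in X.p_in le] assms q_phi by simp
  moreover have "resY (\<phi> x) (q (\<phi> z)) = \<phi> z"
    using phi_res[OF assms(2) X.p_in[OF assms(1)] le] eq q_phi[OF assms(1)] by simp
  ultimately show ?thesis unfolding bs_le_def by simp
qed

lemma phi_bottom: "\<phi> X.bottom = Y.bottom"
  using Y.eq_bottom_if_p_eq_bottom[OF phi_in[OF X.bottom_in]] q_phi[OF X.bottom_in] X.p_bottom phib_bottom
  by simp

definition restrictions_into :: "'y set \<Rightarrow> 'x \<Rightarrow> 'b set" where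
  "restrictions_into G x = {e \<in> B1. le1 e (p x) \<and> \<phi> (resX x e) \<in> G}"

definition pullback_filter :: "'y set \<Rightarrow> 'x \<Rightarrow> 'x set" where
  "pullback_filter G x = up_closure X X.leX (resX x ` restrictions_into G x)"

lemma restrictions_into_meet:
  assumes G: "proper_filter Y Y.leX G" and x: "x \<in> X"
    and e: "e1 \<in> restrictions_into G x" "e2 \<in> restrictions_into G x"
  shows "X.B.meet e1 e2 \<in> restrictions_into G x"
proof -
  have e1: "e1 \<in> B1" "le1 e1 (p x)" "\<phi> (resX x e1) \<in> G"
    and e2: "e2 \<in> B1" "le1 e2 (p x)" "\<phi> (resX x e2) \<in> G"
    using e unfolding restrictions_into_def by auto
  have m: "X.B.meet e1 e2 \<in> B1" "le1 (X.B.meet e1 e2) (p x)"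
    using X.B.meet_in[OF e1(1) e2(1)]
      X.B.le_trans[OF X.B.meet_in[OF e1(1) e2(1)] e1(1) X.p_in[OF x] X.B.meet_lower1[OF e1(1) e2(1)] e1(2)]
    by blast+
  have "le2 (\<phi>b e1) (q (\<phi> x))" "le2 (\<phi>b e2) (q (\<phi> x))"
    using phib_mono[OF e1(1) X.p_in[OF x] e1(2)] phib_mono[OF e2(1) X.p_in[OF x] e2(2)] q_phi[OF x]
    by simp_all
  moreover have "resY (\<phi> x) (\<phi>b e1) \<in> G" "resY (\<phi> x) (\<phi>b e2) \<in> G"
    using e1(3) e2(3) phi_res[OF x e1(1,2)] phi_res[OF x e2(1,2)] by simp_all
  ultimately have "resY (\<phi> x) (Y.B.meet (\<phi>b e1) (\<phi>b e2)) \<in> G"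
    using Y.filter_res_meet[OF G phi_in[OF x] phib_in[OF e1(1)] phib_in[OF e2(1)]] by blast
  then have "\<phi> (resX x (X.B.meet e1 e2)) \<in> G" using phi_res[OF x m] phib_meet[OF e1(1) e2(1)] by simp
  with m show ?thesis unfolding restrictions_into_def by blast
qed

lemma restrictions_into_res_in: "x \<in> X \<Longrightarrow> e \<in> restrictions_into G x \<Longrightarrow> resX x e \<in> X"
  using X.res_in unfolding restrictions_into_def by blast

lemma p_in_restrictions_into: "x \<in> X \<Longrightarrow> \<phi> x \<in> G \<Longrightarrow> p x \<in> restrictions_into G x"
  unfolding restrictions_into_def using X.p_in X.B.le_refl X.res_p by simp

lemma mem_pullback_filter:
  assumes "x \<in> X" "\<phi> x \<in> G"
  shows "x \<in> pullback_filter G x"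
proof -
  have "resX x (p x) \<in> resX x ` restrictions_into G x"
    using p_in_restrictions_into[OF assms] by (rule imageI)
  then have "x \<in> resX x ` restrictions_into G x" using X.res_p[OF assms(1)] by simp
  moreover have "resX x ` restrictions_into G x \<subseteq> X" using restrictions_into_res_in[OF assms(1)] by blast
  ultimately show ?thesis unfolding pullback_filter_def using X.subset_up_closure by blast
qed

lemma pullback_filter_proper:
  assumes G: "proper_filter Y Y.leX G" and x: "x \<in> X" "\<phi> x \<in> G"
  shows "proper_filter X X.leX (pullback_filter G x)"
  unfolding pullback_filter_def
proof (rule X.proper_filter_up_closure)
  let ?E = "restrictions_into G x"
  show "resX x ` ?E \<subseteq> X" using restrictions_into_res_in[OF x(1)] by blast
  show "resX x ` ?E \<noteq> {}" using p_in_restrictions_into[OF x] by blast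
  show "X.bottom \<notin> resX x ` ?E"
  proof
    assume "X.bottom \<in> resX x ` ?E"
    then obtain e where "e \<in> ?E" "X.bottom = resX x e" ..
    then have "\<phi> X.bottom \<in> G" unfolding restrictions_into_def by simp
    then show False using phi_bottom Y.bottom_notin_filter[OF G] by simp
  qed
  show "\<forall>u\<in>resX x ` ?E. \<forall>v\<in>resX x ` ?E. \<exists>z\<in>resX x ` ?E. X.leX z u \<and> X.leX z v"
  proof (intro ballI)
    fix u v assume "u \<in> resX x ` ?E" "v \<in> resX x ` ?E"
    then obtain e1 e2 where e: "e1 \<in> ?E" "e2 \<in> ?E" and uv: "u = resX x e1" "v = resX x e2" by blast
    then have B: "e1 \<in> B1" "le1 e1 (p x)" "e2 \<in> B1" "le1 e2 (p x)"
      unfolding restrictions_into_def by auto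
    have "X.leX (resX x (X.B.meet e1 e2)) u" "X.leX (resX x (X.B.meet e1 e2)) v" unfolding uv
      using X.res_mono[OF x(1) X.B.meet_in[OF B(1,3)] B(1) X.B.meet_lower1[OF B(1,3)] B(2)]
        X.res_mono[OF x(1) X.B.meet_in[OF B(1,3)] B(3) X.B.meet_lower2[OF B(1,3)] B(4)] by blast+
    moreover have "resX x (X.B.meet e1 e2) \<in> resX x ` ?E"
      using restrictions_into_meet[OF G x(1) e] by blast
    ultimately show "\<exists>z\<in>resX x ` ?E. X.leX z u \<and> X.leX z v" by blast
  qed
qed

lemma pullback_filter_subset_preimage:
  assumes G: "proper_filter Y Y.leX G" and x: "x \<in> X"
  shows "pullback_filter G x \<subseteq> {w \<in> X. \<phi> w \<in> G}"
proof
  fix w assume "w \<in> pullback_filter G x"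
  then obtain e where e: "e \<in> restrictions_into G x" and w: "w \<in> X" "X.leX (resX x e) w"
    unfolding pullback_filter_def up_closure_def by blast
  then have "Y.leX (\<phi> (resX x e)) (\<phi> w)" using phi_mono restrictions_into_res_in[OF x] by blast
  then show "w \<in> {w \<in> X. \<phi> w \<in> G}"
    using Y.filter_upward[OF G] e w(1) phi_in unfolding restrictions_into_def by blast
qed

lemma ultrafilter_pullback_filter:
  assumes G: "ultrafilter_of Y Y.leX G" and x: "x \<in> X" "\<phi> x \<in> G"
  shows "ultrafilter_of X X.leX (pullback_filter G x)"
proof (rule X.ultrafilterI_prime_at)
  have GF: "proper_filter Y Y.leX G" using Y.ultrafilter_proper[OF G] .
  show "proper_filter X X.leX (pullback_filter G x)" using pullback_filter_proper[OF GF x] .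
  show "x \<in> pullback_filter G x" using mem_pullback_filter[OF x] .
  fix c1 c2 assume c: "c1 \<in> B1" "c2 \<in> B1" "X.B.meet c1 c2 = X.B.bottom" "X.B.join c1 c2 = p x"
  have le: "le1 c1 (p x)" "le1 c2 (p x)"
    using X.B.join_upper1[OF c(1,2)] X.B.join_upper2[OF c(1,2)] c(4) by simp_all
  have "Y.B.join (\<phi>b c1) (\<phi>b c2) = q (\<phi> x)" using phib_join[OF c(1,2)] c(4) q_phi[OF x(1)] by simp
  then have "resY (\<phi> x) (\<phi>b c1) \<in> G \<or> resY (\<phi> x) (\<phi>b c2) \<in> G"
    using Y.ultrafilter_prime[OF G x(2) phib_in[OF c(1)] phib_in[OF c(2)]] by blast
  then have "c1 \<in> restrictions_into G x \<or> c2 \<in> restrictions_into G x"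
    unfolding restrictions_into_def using phi_res[OF x(1)] c(1,2) le by simp
  then show "resX x c1 \<in> pullback_filter G x \<or> resX x c2 \<in> pullback_filter G x"
    unfolding pullback_filter_def
    using X.subset_up_closure[of "resX x ` restrictions_into G x"] restrictions_into_res_in[OF x(1)] by blast
qed

lemma phi_hat_unique_if_preserves_meets:
  assumes meetsX: "has_binary_meets X p resX le1" and meetsY: "has_binary_meets Y q resY le2"
    and preserves: "preserves_binary_meets X p resX le1 Y q resY le2 \<phi>"
    and G: "ultrafilter_of Y Y.leX G"
    and H1: "H1 \<in> phi_hat X p resX le1 \<phi> G" and H2: "H2 \<in> phi_hat X p resX le1 \<phi> G"
  shows "H1 = H2"
proof -
  have GF: "proper_filter Y Y.leX G" using Y.ultrafilter_proper[OF G] .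
  have U: "ultrafilter_of X X.leX H1" "ultrafilter_of X X.leX H2"
    and preimage: "H1 \<subseteq> {x \<in> X. \<phi> x \<in> G}" "H2 \<subseteq> {x \<in> X. \<phi> x \<in> G}"
    using H1 H2 unfolding phi_hat_def by auto
  show ?thesis
  proof (rule X.ultrafilters_eq_if_meets_nonzero[OF U])
    fix a b assume "a \<in> H1" "b \<in> H2"
    then have ab: "a \<in> X" "b \<in> X" "\<phi> a \<in> G" "\<phi> b \<in> G" using preimage by auto
    show "is_glb X X.leX a b (meet_of X X.leX a b)" using X.meet_of_glb[OF meetsX ab(1,2)] .
    have "meet_of Y Y.leX (\<phi> a) (\<phi> b) \<in> G"
      using Y.filter_glb_closed[OF GF ab(3,4) Y.meet_of_glb[OF meetsY phi_in[OF ab(1)] phi_in[OF ab(2)]]] .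
    then have "\<phi> (meet_of X X.leX a b) \<in> G"
      using preserves ab(1,2) unfolding preserves_binary_meets_def by simp
    then show "meet_of X X.leX a b \<noteq> X.bottom"
      using phi_bottom Y.bottom_notin_filter[OF GF] by auto
  qed
qed

lemma preserves_meets_if_phi_hat_unique:
  assumes meetsX: "has_binary_meets X p resX le1" and meetsY: "has_binary_meets Y q resY le2"
    and unique: "\<And>G H1 H2. ultrafilter_of Y Y.leX G \<Longrightarrow> H1 \<in> phi_hat X p resX le1 \<phi> G
                   \<Longrightarrow> H2 \<in> phi_hat X p resX le1 \<phi> G \<Longrightarrow> H1 = H2"
  shows "preserves_binary_meets X p resX le1 Y q resY le2 \<phi>"
  unfolding preserves_binary_meets_def
proof (intro ballI)
  fix x y assume x: "x \<in> X" and y: "y \<in> X"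
  define m where "m = meet_of X X.leX x y"
  define n where "n = meet_of Y Y.leX (\<phi> x) (\<phi> y)"
  have gm: "is_glb X X.leX x y m" unfolding m_def using X.meet_of_glb[OF meetsX x y] .
  have gn: "is_glb Y Y.leX (\<phi> x) (\<phi> y) n"
    unfolding n_def using Y.meet_of_glb[OF meetsY phi_in[OF x] phi_in[OF y]] .
  have mX: "m \<in> X" and nY: "n \<in> Y" using gm gn unfolding is_glb_def by blast+
  have "Y.leX (\<phi> m) n" using gm gn phi_mono[OF mX] phi_in[OF mX] x y unfolding is_glb_def by blast
  show "\<phi> m = n"
  proof (rule ccontr)
    assume "\<phi> m \<noteq> n"
    then obtain d where d: "d \<in> Y" "d \<noteq> Y.bottom" "Y.leX d n" "Y.B.meet (q d) (q (\<phi> m)) = Y.B.bottom"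
      using Y.exists_disjoint_below[OF phi_in[OF mX] nY \<open>Y.leX (\<phi> m) n\<close>] by blast
    obtain G where G: "ultrafilter_of Y Y.leX G" "d \<in> G" using Y.ultrafilter_exists[OF d(1,2)] by blast
    have GF: "proper_filter Y Y.leX G" using Y.ultrafilter_proper[OF G(1)] .
    have "n \<in> G" using Y.filter_upward[OF GF G(2) nY d(3)] .
    then have "\<phi> x \<in> G" "\<phi> y \<in> G"
      using gn Y.filter_upward[OF GF] phi_in x y unfolding is_glb_def by blast+
    let ?H1 = "pullback_filter G x" and ?H2 = "pullback_filter G y"
    have "?H1 \<in> phi_hat X p resX le1 \<phi> G" "?H2 \<in> phi_hat X p resX le1 \<phi> G"
      unfolding phi_hat_def
      using ultrafilter_pullback_filter[OF G(1)] pullback_filter_subset_preimage[OF GF] x y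
        \<open>\<phi> x \<in> G\<close> \<open>\<phi> y \<in> G\<close> by blast+
    then have "?H1 = ?H2" by (rule unique[OF G(1)])
    then have "x \<in> ?H1" "y \<in> ?H1"
      using mem_pullback_filter x y \<open>\<phi> x \<in> G\<close> \<open>\<phi> y \<in> G\<close> by auto
    then have "m \<in> ?H1"
      using X.filter_glb_closed[OF pullback_filter_proper[OF GF x \<open>\<phi> x \<in> G\<close>] _ _ gm] by blast
    then have "\<phi> m \<in> G" using pullback_filter_subset_preimage[OF GF x] by blast
    then show False using Y.disjoint_notin_filter[OF GF G(2)] d(4) by blast
  qed
qed

end

theorem proposition3p16:
  fixes X :: "'x set" and p :: "'x \<Rightarrow> 'b" and resX :: "'x \<Rightarrow> 'b \<Rightarrow> 'x"
    and B1 :: "'b set" and le1 :: "'b \<Rightarrow> 'b \<Rightarrow> bool"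
    and Y :: "'y set" and q :: "'y \<Rightarrow> 'c" and resY :: "'y \<Rightarrow> 'c \<Rightarrow> 'y"
    and B2 :: "'c set" and le2 :: "'c \<Rightarrow> 'c \<Rightarrow> bool"
    and \<phi> :: "'x \<Rightarrow> 'y" and \<phi>b :: "'b \<Rightarrow> 'c"
  assumes "boolean_set X p resX B1 le1"
    and "boolean_set Y q resY B2 le2"
    and "has_binary_meets X p resX le1"
    and "has_binary_meets Y q resY le2"
    and "bs_morphism X p resX B1 le1 Y q resY B2 le2 \<phi> \<phi>b"
  shows "preserves_binary_meets X p resX le1 Y q resY le2 \<phi> \<longleftrightarrow>
         (\<forall>G. ultrafilter_of Y (bs_le q resY le2) G \<longrightarrow>
            (\<forall>H1\<in>phi_hat X p resX le1 \<phi> G. \<forall>H2\<in>phi_hat X p resX le1 \<phi> G. H1 = H2))"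
proof -
  interpret boolean_set_morphism X p resX B1 le1 Y q resY B2 le2 \<phi> \<phi>b
    using assms(1,2,5) by (simp add: boolean_set_morphism_def boolean_set_morphism_axioms_def bset_def)
  show ?thesis
    using phi_hat_unique_if_preserves_meets[OF assms(3,4)]
      preserves_meets_if_phi_hat_unique[OF assms(3,4)] by blast
qed

end
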